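(* Let $a\ge b\ge2$ be integers, $\beta>1$ the positive root of $\beta^2=a\beta+b$, and $\beta'=a-\beta$. Then for each $n\in\mathbb N$, \[ \inf_{j\in\mathbb Z}P_{\mathbf h(j)}(\beta')\in\Big\{\mu_n+(\beta')^n\tfrac{b-1}{1-(\beta')^2}\,t:\ t\in[\beta',1]\Big\}, \qquad \mu_n=\min_{j\in\{0,1,\dots,b^n-1\}}P_{\mathrm{Pref}_n(\mathbf h(j))}(\beta'). \]
   Context: For an algebraic integer $\beta$, the $\beta$-adic expansion of $x\in\mathbb Z[\beta]$ is the unique infinite word $\mathbf h(x)=u_0u_1u_2\cdots$ with $u_n\in\{0,1,\dots,|N(\beta)|-1\}$ such that $x-\sum_{i=0}^{n-1}u_i\beta^i\in\beta^n\mathbb Z[\beta]$ for all $n\in\mathbb N$; here $|N(\beta)|=b$. $\mathrm{Pref}_n(\mathbf u)$ denotes the prefix of length $n$ of an infinite word $\mathbf u$. For a finite word $w=w_0\cdots w_{k-1}$, $P_w(X)=\sum_{i=0}^{k-1}w_iX^i$; for an infinite word $\mathbf u$, $P_{\mathbf u}(X)=\sum_{i\ge0}u_iX^i$. *)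

theory Defs
  imports Complex_Main
begin

definition in_beta_pow_Zbeta :: "real \<Rightarrow> nat \<Rightarrow> real \<Rightarrow> bool" where
  "in_beta_pow_Zbeta \<beta> n y \<longleftrightarrow> (\<exists>p q :: int. y = \<beta> ^ n * (of_int p + of_int q * \<beta>))"

text \<open>u is a beta-adic expansion of x with digits in {0,...,b-1}, where b = |N(beta)|.\<close>
definition is_beta_expansion :: "real \<Rightarrow> nat \<Rightarrow> real \<Rightarrow> (nat \<Rightarrow> nat) \<Rightarrow> bool" where
  "is_beta_expansion \<beta> b x u \<longleftrightarrow>
     (\<forall>i. u i < b) \<and>
     (\<forall>n. in_beta_pow_Zbeta \<beta> n (x - (\<Sum>i<n. real (u i) * \<beta> ^ i)))"

definition beta_exp :: "real \<Rightarrow> nat \<Rightarrow> real \<Rightarrow> (nat \<Rightarrow> nat)" where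
  "beta_exp \<beta> b x = (THE u. is_beta_expansion \<beta> b x u)"

definition pref_poly :: "(nat \<Rightarrow> nat) \<Rightarrow> nat \<Rightarrow> real \<Rightarrow> real" where
  "pref_poly u n X = (\<Sum>i<n. real (u i) * X ^ i)"

definition word_series :: "(nat \<Rightarrow> nat) \<Rightarrow> real \<Rightarrow> real" where
  "word_series u X = (\<Sum>i. real (u i) * X ^ i)"

end

theory Submission imports Defs begin

text \<open>Since \<open>-1 < \<beta>' < 0\<close>, a digit word \<open>u\<close> over \<open>{0,\<dots>,b-1}\<close> has
  \<open>P\<^sub>u(\<beta>') \<in> [\<beta>', 1] \<cdot> (b-1)/(1-\<beta>'\<^sup>2)\<close>: the extremes are reached by putting \<open>b-1\<close> on the
  even, respectively odd, positions. Splitting \<open>h(j)\<close> after \<open>n\<close> digits writes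
  \<open>P\<^bsub>h(j)\<^esub>(\<beta>')\<close> as a prefix value plus \<open>\<beta>'\<^sup>n\<close> times such a tail value. The prefix of length
  \<open>n\<close> of \<open>h(j)\<close> only depends on \<open>j mod b\<^sup>n\<close>, because \<open>b\<^sup>n = \<beta>\<^sup>n (\<beta> - a)\<^sup>n \<in> \<beta>\<^sup>n \<int>[\<beta>]\<close>
  and \<open>\<beta>\<close>-adic expansions are unique; so the prefix values are bounded below by \<open>\<mu>\<^sub>n\<close>, with
  equality for some \<open>j < b\<^sup>n\<close>, which pins the infimum into the stated interval.\<close>

lemma summable_word_series:
  fixes x :: real
  assumes "\<bar>x\<bar> < 1" and "\<forall>i. u i < B"
  shows "summable (\<lambda>i. real (u i) * x ^ i)"
proof (rule summable_comparison_test)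
  show "\<exists>N. \<forall>i\<ge>N. norm (real (u i) * x ^ i) \<le> real B * \<bar>x\<bar> ^ i"
    using assms(2) by (auto simp: abs_mult power_abs less_imp_le intro!: mult_right_mono)
  show "summable (\<lambda>i. real B * \<bar>x\<bar> ^ i)"
    using assms(1) by (intro summable_mult summable_geometric) simp
qed

lemma word_series_split:
  fixes x :: real
  assumes "\<bar>x\<bar> < 1" and "\<forall>i. u i < B"
  shows "word_series u x = pref_poly u n x + x ^ n * word_series (\<lambda>i. u (i + n)) x"
proof -
  have tail: "summable (\<lambda>i. real (u (i + n)) * x ^ i)"
    using assms by (intro summable_word_series[where B = B]) auto
  have "(\<Sum>i. real (u (i + n)) * x ^ (i + n)) = (\<Sum>i. x ^ n * (real (u (i + n)) * x ^ i))"
    by (simp add: power_add mult_ac)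
  also have "\<dots> = x ^ n * word_series (\<lambda>i. u (i + n)) x"
    unfolding word_series_def using tail by (rule suminf_mult)
  finally show ?thesis
    using suminf_split_initial_segment[OF summable_word_series[OF assms], of n]
    unfolding word_series_def pref_poly_def by simp
qed

lemma word_series_bounds:
  fixes x :: real
  assumes "-1 < x" and "x \<le> 0" and "\<forall>i. u i < B"
  shows "x * ((real B - 1) / (1 - x\<^sup>2)) \<le> word_series u x"
    and "word_series u x \<le> (real B - 1) / (1 - x\<^sup>2)"
proof -
  define K where "K = real B - 1"
  have digit: "0 \<le> real (u i)" "real (u i) \<le> K" for i
    using assms(3)[rule_format, of i] unfolding K_def by auto
  \<comment> \<open>\<open>K/2 (x\<^sup>i \<plusminus> \<bar>x\<^sup>i\<bar>)\<close> is the larger, resp. smaller, of \<open>0\<close> and \<open>K x\<^sup>i\<close>\<close>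
  have term_bounds: "K / 2 * (x ^ i - \<bar>x ^ i\<bar>) \<le> real (u i) * x ^ i"
    "real (u i) * x ^ i \<le> K / 2 * (x ^ i + \<bar>x ^ i\<bar>)" for i
    using digit[of i] mult_right_mono[of "real (u i)" K "x ^ i"]
      mult_right_mono_neg[of "real (u i)" K "x ^ i"]
    by (cases "x ^ i \<ge> 0"; simp add: mult_nonneg_nonpos)+
  have "\<bar>x\<bar> < 1" using assms by simp
  then have "x\<^sup>2 < 1" by (simp add: abs_square_less_1)
  have series: "(\<lambda>i. real (u i) * x ^ i) sums word_series u x"
    unfolding word_series_def using summable_word_series[OF \<open>\<bar>x\<bar> < 1\<close> assms(3)]
    by (rule summable_sums)
  have geom: "(\<lambda>i. x ^ i) sums (1 / (1 - x))" "(\<lambda>i. \<bar>x ^ i\<bar>) sums (1 / (1 + x))"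
    using geometric_sums[of x] geometric_sums[of "\<bar>x\<bar>"] assms by (simp_all add: power_abs)
  have "x * ((real B - 1) / (1 - x\<^sup>2)) = K / 2 * (1 / (1 - x) - 1 / (1 + x))"
    using assms \<open>x\<^sup>2 < 1\<close> by (simp add: K_def field_simps power2_eq_square)
  also have "\<dots> \<le> word_series u x"
    by (rule sums_le[OF _ sums_mult[OF sums_diff[OF geom]] series]) (rule term_bounds)
  finally show "x * ((real B - 1) / (1 - x\<^sup>2)) \<le> word_series u x" .
  have "word_series u x \<le> K / 2 * (1 / (1 - x) + 1 / (1 + x))"
    by (rule sums_le[OF _ series sums_mult[OF sums_add[OF geom]]]) (rule term_bounds)
  also have "\<dots> = (real B - 1) / (1 - x\<^sup>2)"
    using assms \<open>x\<^sup>2 < 1\<close> by (simp add: K_def field_simps power2_eq_square)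
  finally show "word_series u x \<le> (real B - 1) / (1 - x\<^sup>2)" .
qed

lemma word_series_prefix_tail:
  fixes x :: real
  assumes "-1 < x" and "x \<le> 0" and "\<forall>i. u i < B"
  shows "\<exists>t\<in>{x..1}. word_series u x = pref_poly u n x + x ^ n * ((real B - 1) / (1 - x\<^sup>2)) * t"
proof -
  define K where "K = (real B - 1) / (1 - x\<^sup>2)"
  define W where "W = word_series (\<lambda>i. u (i + n)) x"
  have tail: "\<forall>i. u (i + n) < B" using assms(3) by simp
  have W: "x * K \<le> W" "W \<le> K"
    using word_series_bounds[OF assms(1,2) tail] unfolding K_def W_def by auto
  have split: "word_series u x = pref_poly u n x + x ^ n * W"
    unfolding W_def using assms by (intro word_series_split[where B = B]) auto
  have "\<exists>t\<in>{x..1}. word_series u x = pref_poly u n x + x ^ n * K * t"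
  proof (cases "K = 0")
    case True
    then show ?thesis using W split assms(1,2) by (intro bexI[of _ 1]) auto
  next
    case False
    have "0 \<le> (1 - x) * K" using W by (simp add: algebra_simps)
    then have "0 \<le> K" using assms(2) by (simp add: zero_le_mult_iff)
    with False have "0 < K" by simp
    then have "W / K \<in> {x..1}" using W by (simp add: field_simps)
    then show ?thesis using split False by (intro bexI[of _ "W / K"]) simp_all
  qed
  then show ?thesis unfolding K_def .
qed

lemma mult_between_min_max:
  fixes c lo hi t :: real
  assumes "t \<in> {lo..hi}"
  shows "min (c * lo) (c * hi) \<le> c * t" and "c * t \<le> max (c * lo) (c * hi)"
  using assms by (smt (verit) atLeastAtMost_iff mult_left_mono mult_left_mono_neg)+

lemma mem_scaled_interval:
  fixes c lo hi y :: real
  assumes "lo \<le> hi" and "min (c * lo) (c * hi) \<le> y" and "y \<le> max (c * lo) (c * hi)"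
  shows "y \<in> {c * t | t. t \<in> {lo..hi}}"
proof (cases "c = 0")
  case True
  then show ?thesis using assms by auto
next
  case False
  have "y / c \<in> {lo..hi}"
  proof (cases "c > 0")
    case True
    then show ?thesis using assms by (simp add: field_simps min_def max_def split: if_splits)
  next
    case False
    with \<open>c \<noteq> 0\<close> have "c < 0" by simp
    then show ?thesis using assms
      by (auto simp: field_simps min_def max_def mult_le_cancel_left split: if_splits)
  qed
  moreover have "y = c * (y / c)" using \<open>c \<noteq> 0\<close> by simp
  ultimately show ?thesis by blast
qed

lemma INF_mem_scaled_interval:
  fixes f g :: "'a \<Rightarrow> real"
  assumes "\<And>j. \<exists>t\<in>{lo..hi}. f j = g j + c * t"
    and "\<And>j. \<mu> \<le> g j" and "g j\<^sub>0 = \<mu>"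
  shows "(INF j. f j) \<in> {\<mu> + c * t | t. t \<in> {lo..hi}}"
proof -
  have lower: "\<mu> + min (c * lo) (c * hi) \<le> f j" for j
  proof -
    obtain t where "t \<in> {lo..hi}" "f j = g j + c * t" using assms(1) by blast
    then show ?thesis using assms(2)[of j] mult_between_min_max(1)[of t lo hi c] by simp
  qed
  obtain t\<^sub>0 where t\<^sub>0: "t\<^sub>0 \<in> {lo..hi}" "f j\<^sub>0 = \<mu> + c * t\<^sub>0" using assms(1,3) by metis
  have "\<mu> + min (c * lo) (c * hi) \<le> (INF j. f j)"
    by (rule cINF_greatest) (auto intro: lower)
  moreover have "(INF j. f j) \<le> f j\<^sub>0"
    by (rule cINF_lower) (auto intro: lower simp: bdd_below_def)
  moreover have "c * t\<^sub>0 \<le> max (c * lo) (c * hi)"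
    using t\<^sub>0(1) by (rule mult_between_min_max)
  ultimately have "(INF j. f j) - \<mu> \<in> {c * t | t. t \<in> {lo..hi}}"
    using t\<^sub>0 by (intro mem_scaled_interval) auto
  then show ?thesis by force
qed

locale quadratic_base =
  fixes a b :: nat and \<beta> :: real
  assumes b_ge_2: "b \<ge> 2" and a_ge_b: "a \<ge> b" and beta_gt_1: "\<beta> > 1"
    and beta_square: "\<beta>\<^sup>2 = real a * \<beta> + real b"
begin

lemma beta_mult_conj: "\<beta> * (\<beta> - real a) = real b"
  using beta_square by (simp add: power2_eq_square algebra_simps)

lemma beta_gt_a: "\<beta> > real a"
proof -
  have "\<beta> * (\<beta> - real a) > 0" using beta_mult_conj b_ge_2 by simp
  then show ?thesis using beta_gt_1 by (simp add: zero_less_mult_iff)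
qed

lemma beta_less_Suc_a: "\<beta> < real a + 1"
proof -
  have "\<beta> * (\<beta> - real a) < \<beta> * 1" using beta_mult_conj a_ge_b beta_gt_a by simp
  then show ?thesis using beta_gt_1 by simp
qed

text \<open>Descent: from \<open>q \<beta> \<in> \<int>\<close> one gets \<open>q' \<beta> \<in> \<int>\<close> with \<open>q' = q (\<beta> - a) \<in> (0, q)\<close>.\<close>
lemma nat_mult_beta_not_int: "q > 0 \<Longrightarrow> real q * \<beta> \<noteq> of_int m"
proof (induction q arbitrary: m rule: less_induct)
  case (less q)
  show ?case
  proof
    assume int: "real q * \<beta> = of_int m"
    define q' where "q' = m - int q * int a"
    have q': "real_of_int q' = real q * (\<beta> - real a)" using int by (simp add: q'_def algebra_simps)
    have "0 < real q * (\<beta> - real a)" "real q * (\<beta> - real a) < real q * 1"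
      using less.prems beta_gt_a beta_less_Suc_a by simp_all
    then have "0 < q'" "q' < int q" using q' by linarith+
    moreover have "real (nat q') * \<beta> = of_int (int q * int b)"
      using \<open>0 < q'\<close> q' beta_mult_conj by (simp add: mult_ac)
    ultimately show False using less.IH[of "nat q'" "int q * int b"] by linarith
  qed
qed

lemma int_combination_beta_eq_0:
  assumes "of_int r + of_int s * \<beta> = 0"
  shows "r = 0 \<and> s = 0"
proof (cases "s = 0")
  case True
  then show ?thesis using assms by simp
next
  case False
  have "real (nat \<bar>s\<bar>) * \<beta> = of_int (- sgn s * r)"
    using assms False by (cases "s > 0") (auto simp: algebra_simps)
  then show ?thesis using nat_mult_beta_not_int[of "nat \<bar>s\<bar>" "- sgn s * r"] False by simp
qed

definition Zbeta :: "real set" where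
  "Zbeta = {of_int p + of_int q * \<beta> | p q. True}"

lemma in_beta_pow_Zbeta_iff: "in_beta_pow_Zbeta \<beta> n y \<longleftrightarrow> (\<exists>z\<in>Zbeta. y = \<beta> ^ n * z)"
  unfolding in_beta_pow_Zbeta_def Zbeta_def by blast

lemma Zbeta_of_int [simp]: "of_int m \<in> Zbeta"
  unfolding Zbeta_def by (rule CollectI, rule exI[of _ m], rule exI[of _ 0]) simp

lemma Zbeta_0 [simp]: "0 \<in> Zbeta" and Zbeta_1 [simp]: "1 \<in> Zbeta"
  using Zbeta_of_int[of 0] Zbeta_of_int[of 1] by simp_all

lemma Zbeta_of_nat [simp]: "real m \<in> Zbeta"
  using Zbeta_of_int[of "int m"] by simp

lemma Zbeta_beta [simp]: "\<beta> \<in> Zbeta"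
  unfolding Zbeta_def by (rule CollectI, rule exI[of _ 0], rule exI[of _ 1]) simp

lemma Zbeta_diff [simp]: "x \<in> Zbeta \<Longrightarrow> y \<in> Zbeta \<Longrightarrow> x - y \<in> Zbeta"
proof -
  assume "x \<in> Zbeta" "y \<in> Zbeta"
  then obtain p q r s where "x = of_int p + of_int q * \<beta>" "y = of_int r + of_int s * \<beta>"
    unfolding Zbeta_def by blast
  then have "x - y = of_int (p - r) + of_int (q - s) * \<beta>" by (simp add: algebra_simps)
  then show ?thesis unfolding Zbeta_def by blast
qed

lemma Zbeta_add [simp]: "x \<in> Zbeta \<Longrightarrow> y \<in> Zbeta \<Longrightarrow> x + y \<in> Zbeta"
  using Zbeta_diff[of x "0 - y"] Zbeta_diff[of 0 y] by simp

lemma Zbeta_beta_mult: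
  assumes "z \<in> Zbeta"
  obtains p q where "z = of_int p + of_int q * \<beta>"
    and "\<beta> * z = of_int (q * int b) + of_int (p + q * int a) * \<beta>"
proof -
  obtain p q where z: "z = of_int p + of_int q * \<beta>" using assms unfolding Zbeta_def by blast
  have "\<beta> * z = of_int p * \<beta> + of_int q * \<beta>\<^sup>2" unfolding z by (simp add: algebra_simps power2_eq_square)
  also have "\<dots> = of_int (q * int b) + of_int (p + q * int a) * \<beta>"
    unfolding beta_square by (simp add: algebra_simps)
  finally show thesis using z that by blast
qed

lemma Zbeta_mult [simp]: "x \<in> Zbeta \<Longrightarrow> y \<in> Zbeta \<Longrightarrow> x * y \<in> Zbeta"
proof -
  assume "x \<in> Zbeta" "y \<in> Zbeta"
  obtain p q where x: "x = of_int p + of_int q * \<beta>" using \<open>x \<in> Zbeta\<close> unfolding Zbeta_def by blast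
  obtain r s where y: "y = of_int r + of_int s * \<beta>"
    and beta_y: "\<beta> * y = of_int (s * int b) + of_int (r + s * int a) * \<beta>"
    using Zbeta_beta_mult[OF \<open>y \<in> Zbeta\<close>] by blast
  have "x * y = of_int p * y + of_int q * (\<beta> * y)" unfolding x by (simp add: algebra_simps)
  also have "\<dots> = of_int (p * r + q * s * int b) + of_int (p * s + q * (r + s * int a)) * \<beta>"
    unfolding beta_y unfolding y by (simp add: algebra_simps)
  finally show ?thesis unfolding Zbeta_def by blast
qed

lemma Zbeta_power [simp]: "x \<in> Zbeta \<Longrightarrow> x ^ n \<in> Zbeta"
  by (induction n) simp_all

lemma Zbeta_sum: "(\<And>i. i \<in> A \<Longrightarrow> f i \<in> Zbeta) \<Longrightarrow> sum f A \<in> Zbeta"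
  by (induction A rule: infinite_finite_induct) auto

text \<open>\<open>\<beta> \<int>[\<beta>] \<inter> \<int> = b \<int>\<close>: the norm of \<open>\<beta>\<close> is \<open>-b\<close>.\<close>
lemma dvd_if_beta_mult_Zbeta:
  assumes "z \<in> Zbeta" and "\<beta> * z = of_int c"
  shows "int b dvd c"
proof -
  obtain p q where "\<beta> * z = of_int (q * int b) + of_int (p + q * int a) * \<beta>"
    using Zbeta_beta_mult[OF assms(1)] .
  then have "of_int (q * int b - c) + of_int (p + q * int a) * \<beta> = 0" using assms(2) by simp
  then have "q * int b - c = 0" using int_combination_beta_eq_0 by blast
  then show ?thesis by (metis dvd_triv_right eq_iff_diff_eq_0)
qed

lemma digits_eq_if_diff_in_beta_pow:
  assumes "\<forall>i. u i < b" and "\<forall>i. v i < b"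
    and "in_beta_pow_Zbeta \<beta> n (\<Sum>i<n. (real (u i) - real (v i)) * \<beta> ^ i)"
  shows "\<forall>i<n. u i = v i"
  using assms
proof (induction n arbitrary: u v)
  case 0
  then show ?case by simp
next
  case (Suc n)
  define e where "e i = int (u i) - int (v i)" for i
  have e: "real (u i) - real (v i) = of_int (e i)" for i unfolding e_def by simp
  obtain z where z: "z \<in> Zbeta" and S: "(\<Sum>i<Suc n. of_int (e i) * \<beta> ^ i) = \<beta> ^ Suc n * z"
    using Suc.prems(3) unfolding in_beta_pow_Zbeta_iff e by blast
  define S' where "S' = (\<Sum>i<n. of_int (e (Suc i)) * \<beta> ^ i)"
  have S_split: "(\<Sum>i<Suc n. of_int (e i) * \<beta> ^ i) = of_int (e 0) + \<beta> * S'"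
    unfolding S'_def sum.lessThan_Suc_shift by (simp add: sum_distrib_left mult_ac)
  have "\<beta> * (\<beta> ^ n * z - S') = of_int (e 0)" using S S_split by (simp add: algebra_simps)
  moreover have "\<beta> ^ n * z - S' \<in> Zbeta" unfolding S'_def using z by (simp add: Zbeta_sum)
  ultimately have "int b dvd e 0" by (rule dvd_if_beta_mult_Zbeta[rotated])
  have e0: "e 0 = 0"
  proof (rule ccontr)
    assume "e 0 \<noteq> 0"
    then have "\<bar>int b\<bar> \<le> \<bar>e 0\<bar>" using \<open>int b dvd e 0\<close> by (rule dvd_imp_le_int)
    moreover have "\<bar>e 0\<bar> < int b"
      unfolding e_def using Suc.prems(1,2)[rule_format, of 0] by (auto simp: abs_if)
    ultimately show False by simp
  qed
  then have "S' = \<beta> ^ n * z" using S S_split beta_gt_1 by (simp del: sum.lessThan_Suc)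
  then have "in_beta_pow_Zbeta \<beta> n (\<Sum>i<n. (real (u (Suc i)) - real (v (Suc i))) * \<beta> ^ i)"
    unfolding in_beta_pow_Zbeta_iff e S'_def using z by blast
  then have tail: "\<forall>i<n. u (Suc i) = v (Suc i)"
    using Suc.IH[of "u \<circ> Suc" "v \<circ> Suc"] Suc.prems by simp
  show ?case
  proof (intro allI impI)
    fix i
    assume "i < Suc n"
    then show "u i = v i" using tail e0 unfolding e_def by (cases i) auto
  qed
qed

lemma expansions_prefix_eq:
  assumes "is_beta_expansion \<beta> b x u" and "is_beta_expansion \<beta> b y v"
    and "in_beta_pow_Zbeta \<beta> n (x - y)"
  shows "\<forall>i<n. u i = v i"
proof (rule digits_eq_if_diff_in_beta_pow)
  show "\<forall>i. u i < b" "\<forall>i. v i < b" using assms(1,2) unfolding is_beta_expansion_def by auto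
  obtain z\<^sub>x where z\<^sub>x: "z\<^sub>x \<in> Zbeta" "x - (\<Sum>i<n. real (u i) * \<beta> ^ i) = \<beta> ^ n * z\<^sub>x"
    using assms(1) unfolding is_beta_expansion_def in_beta_pow_Zbeta_iff by blast
  obtain z\<^sub>y where z\<^sub>y: "z\<^sub>y \<in> Zbeta" "y - (\<Sum>i<n. real (v i) * \<beta> ^ i) = \<beta> ^ n * z\<^sub>y"
    using assms(2) unfolding is_beta_expansion_def in_beta_pow_Zbeta_iff by blast
  obtain z where z: "z \<in> Zbeta" "x - y = \<beta> ^ n * z"
    using assms(3) unfolding in_beta_pow_Zbeta_iff by blast
  have "z - z\<^sub>x + z\<^sub>y \<in> Zbeta" using z(1) z\<^sub>x(1) z\<^sub>y(1) by simp
  moreover have "(\<Sum>i<n. (real (u i) - real (v i)) * \<beta> ^ i) = \<beta> ^ n * (z - z\<^sub>x + z\<^sub>y)"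
    using z(2) z\<^sub>x(2) z\<^sub>y(2) by (simp add: algebra_simps sum_subtractf)
  ultimately show "in_beta_pow_Zbeta \<beta> n (\<Sum>i<n. (real (u i) - real (v i)) * \<beta> ^ i)"
    unfolding in_beta_pow_Zbeta_iff by blast
qed

lemma beta_expansion_unique:
  assumes "is_beta_expansion \<beta> b x u" and "is_beta_expansion \<beta> b x v"
  shows "u = v"
proof
  fix i
  have "in_beta_pow_Zbeta \<beta> (Suc i) (x - x)"
    unfolding in_beta_pow_Zbeta_def by (intro exI[of _ 0]) simp
  then show "u i = v i" using expansions_prefix_eq[OF assms] by blast
qed

text \<open>Digit extraction on \<open>p + q \<beta>\<close>: with \<open>d = p mod b\<close>, using \<open>1/\<beta> = (\<beta> - a)/b\<close>,
  \<open>(p + q \<beta> - d)/\<beta> = (q - a (p div b)) + (p div b) \<beta>\<close>.\<close>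
fun digit_shift :: "int \<times> int \<Rightarrow> int \<times> int" where
  "digit_shift (p, q) = (q - int a * (p div int b), p div int b)"

definition Zbeta_val :: "int \<times> int \<Rightarrow> real" where
  "Zbeta_val x = of_int (fst x) + of_int (snd x) * \<beta>"

definition digits :: "int \<times> int \<Rightarrow> nat \<Rightarrow> nat" where
  "digits x i = nat (fst ((digit_shift ^^ i) x) mod int b)"

lemma Zbeta_val_digit_shift:
  "Zbeta_val x = of_int (fst x mod int b) + \<beta> * Zbeta_val (digit_shift x)"
proof -
  obtain p q where x: "x = (p, q)" by (cases x)
  have "\<beta> * Zbeta_val (digit_shift x) = of_int q * \<beta> + of_int (p div int b) * (\<beta>\<^sup>2 - real a * \<beta>)"
    unfolding x Zbeta_val_def by (simp add: algebra_simps power2_eq_square)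
  also have "\<dots> = of_int q * \<beta> + of_int (p div int b * int b)"
    unfolding beta_square by simp
  finally have "\<beta> * Zbeta_val (digit_shift x) = of_int q * \<beta> + of_int (p div int b * int b)" .
  moreover have "real_of_int p = of_int (p mod int b) + of_int (p div int b * int b)"
    by (metis mod_div_mult_eq of_int_add)
  ultimately show ?thesis unfolding x Zbeta_val_def by simp
qed

lemma Zbeta_val_minus_digits:
  "Zbeta_val x - (\<Sum>i<n. real (digits x i) * \<beta> ^ i) = \<beta> ^ n * Zbeta_val ((digit_shift ^^ n) x)"
proof (induction n)
  case 0
  then show ?case by simp
next
  case (Suc n)
  have "real (digits x n) = of_int (fst ((digit_shift ^^ n) x) mod int b)"
    unfolding digits_def using b_ge_2 by simp
  then show ?case
    using Suc Zbeta_val_digit_shift[of "(digit_shift ^^ n) x"] by (simp add: algebra_simps)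
qed

lemma beta_expansion_exists:
  assumes "x \<in> Zbeta"
  shows "\<exists>u. is_beta_expansion \<beta> b x u"
proof -
  obtain p q where "x = Zbeta_val (p, q)" using assms unfolding Zbeta_def Zbeta_val_def by auto
  moreover have "is_beta_expansion \<beta> b (Zbeta_val (p, q)) (digits (p, q))"
    unfolding is_beta_expansion_def in_beta_pow_Zbeta_def
  proof (intro conjI allI)
    show "digits (p, q) i < b" for i unfolding digits_def using b_ge_2 by (simp add: nat_less_iff)
    show "\<exists>p' q'. Zbeta_val (p, q) - (\<Sum>i<n. real (digits (p, q) i) * \<beta> ^ i)
      = \<beta> ^ n * (of_int p' + of_int q' * \<beta>)" for n
      using Zbeta_val_minus_digits[of "(p, q)" n] unfolding Zbeta_val_def by blast
  qed
  ultimately show ?thesis by blast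
qed

lemma beta_exp_is_expansion:
  assumes "x \<in> Zbeta"
  shows "is_beta_expansion \<beta> b x (beta_exp \<beta> b x)"
  unfolding beta_exp_def using beta_expansion_exists[OF assms]
  by (metis beta_expansion_unique theI)

lemma beta_exp_prefix_mod:
  fixes j :: int
  shows "pref_poly (beta_exp \<beta> b (of_int j)) n x
    = pref_poly (beta_exp \<beta> b (real (nat (j mod int b ^ n)))) n x"
proof -
  define k where "k = nat (j mod int b ^ n)"
  have k: "int k = j mod int b ^ n" unfolding k_def using b_ge_2 by simp
  obtain m where m: "j - int k = int b ^ n * m"
    unfolding k by (metis minus_mod_eq_mult_div)
  have "of_int j - real k = of_int (j - int k)" by simp
  also have "\<dots> = real b ^ n * of_int m" unfolding m by simp
  also have "\<dots> = \<beta> ^ n * ((\<beta> - real a) ^ n * of_int m)"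
    unfolding beta_mult_conj[symmetric] power_mult_distrib by (simp add: mult.assoc)
  finally have "of_int j - real k = \<beta> ^ n * ((\<beta> - real a) ^ n * of_int m)" .
  moreover have "(\<beta> - real a) ^ n * of_int m \<in> Zbeta" by simp
  ultimately have "in_beta_pow_Zbeta \<beta> n (of_int j - real k)"
    unfolding in_beta_pow_Zbeta_iff by blast
  moreover have "is_beta_expansion \<beta> b (of_int j) (beta_exp \<beta> b (of_int j))"
    and "is_beta_expansion \<beta> b (real k) (beta_exp \<beta> b (real k))"
    by (simp_all add: beta_exp_is_expansion)
  ultimately have "\<forall>i<n. beta_exp \<beta> b (of_int j) i = beta_exp \<beta> b (real k) i"
    by (intro expansions_prefix_eq)
  then show ?thesis unfolding pref_poly_def k_def by (intro sum.cong) auto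
qed

end

theorem proposition4:
  fixes a b :: nat and \<beta> :: real and n :: nat
  assumes "b \<ge> 2" and "a \<ge> b" and "\<beta> > 1" and "\<beta> ^ 2 = real a * \<beta> + real b"
  defines "\<beta>' \<equiv> real a - \<beta>"
  defines "\<mu> \<equiv> Min ((\<lambda>j::nat. pref_poly (beta_exp \<beta> b (real j)) n \<beta>') ` {0..<b ^ n})"
  shows "(INF j::int. word_series (beta_exp \<beta> b (of_int j)) \<beta>')
           \<in> {\<mu> + \<beta>' ^ n * ((real b - 1) / (1 - \<beta>' ^ 2)) * t | t. t \<in> {\<beta>'..1}}"
proof -
  interpret quadratic_base a b \<beta> using assms(1-4) by unfold_locales
  have conj: "-1 < \<beta>'" "\<beta>' \<le> 0" using beta_gt_a beta_less_Suc_a unfolding \<beta>'_def by auto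
  have digits: "\<forall>i. beta_exp \<beta> b (of_int j) i < b" for j :: int
    using beta_exp_is_expansion[of "of_int j"] unfolding is_beta_expansion_def by simp
  have "0 < b ^ n" using assms(1) by simp
  have prefix_ge: "\<mu> \<le> pref_poly (beta_exp \<beta> b (of_int j)) n \<beta>'" for j :: int
  proof -
    have "nat (j mod int b ^ n) \<in> {0..<b ^ n}"
      using \<open>0 < b ^ n\<close> by (simp add: nat_less_iff)
    then show ?thesis unfolding beta_exp_prefix_mod[of j] \<mu>_def
      by (intro Min_le finite_imageI image_eqI[OF refl]) simp_all
  qed
  have "\<mu> \<in> (\<lambda>j::nat. pref_poly (beta_exp \<beta> b (real j)) n \<beta>') ` {0..<b ^ n}"
    unfolding \<mu>_def using \<open>0 < b ^ n\<close> by (intro Min_in) auto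
  then obtain k :: nat where prefix_min: "pref_poly (beta_exp \<beta> b (of_int (int k))) n \<beta>' = \<mu>"
    by auto
  have tail: "\<exists>t\<in>{\<beta>'..1}. word_series (beta_exp \<beta> b (of_int j)) \<beta>'
      = pref_poly (beta_exp \<beta> b (of_int j)) n \<beta>' + \<beta>' ^ n * ((real b - 1) / (1 - \<beta>' ^ 2)) * t"
    for j :: int
    using word_series_prefix_tail[OF conj digits] .
  show ?thesis
    using INF_mem_scaled_interval[where g = "\<lambda>j. pref_poly (beta_exp \<beta> b (of_int j)) n \<beta>'",
        OF tail prefix_ge prefix_min] .
qed

end
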